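(* Let $G$ be a connected interval graph with a fixed interval representation in which all right endpoints are distinct, and let $V_2$ be the set of vertices with final label 2 in the labeling described in the context. Then for every dominating set $D$ of $G$, $D\leftrightarrow_{|D|+1} V_2$.
   Context: $G$ is given by closed intervals $I_v=[l(v),r(v)]$, $v\in V(G)$, with $uv\in E(G)$ iff $I_u\cap I_v\ne\emptyset$. Labeling procedure, repeated until all vertices are labeled: (1) pick the unlabeled vertex $v_i$ with minimum $r$-value among unlabeled vertices and give it label 1; (2) let $v_j$ be the vertex of $N[v_i]$ with maximum $r$-value (possibly already labeled, possibly $v_j=v_i$) and (re)label $v_j$ with label 2; (3) give label 3 to every still unlabeled vertex of $N(v_j)$. $N[v]$, $N(v)$ are closed and open neighbourhoods. A set $D\subseteq V(G)$ is a dominating set if every vertex is in $D$ or adjacent to a vertex of $D$. Two dominating sets $D,D'$ are adjacent if $|D\triangle D'|=1$. For dominating sets $D_p,D_q$ and an integer $k>0$, write $D_p\leftrightarrow_k D_q$ if there is a sequence $D_0=D_p,\dots,D_\ell=D_q$ ($\ell\ge0$) of dominating sets of $G$ with consecutive sets adjacent and $|D_i|\le k$ for all $i$. *)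

theory Defs
  imports Complex_Main
begin

definition iadj :: "'a set \<Rightarrow> ('a \<Rightarrow> real) \<Rightarrow> ('a \<Rightarrow> real) \<Rightarrow> 'a \<Rightarrow> 'a \<Rightarrow> bool" where
  "iadj V l r u v \<longleftrightarrow> u \<in> V \<and> v \<in> V \<and> u \<noteq> v \<and> {l u..r u} \<inter> {l v..r v} \<noteq> {}"

definition open_nbhd :: "'a set \<Rightarrow> ('a \<Rightarrow> real) \<Rightarrow> ('a \<Rightarrow> real) \<Rightarrow> 'a \<Rightarrow> 'a set" where
  "open_nbhd V l r v = {u \<in> V. iadj V l r v u}"

definition closed_nbhd :: "'a set \<Rightarrow> ('a \<Rightarrow> real) \<Rightarrow> ('a \<Rightarrow> real) \<Rightarrow> 'a \<Rightarrow> 'a set" where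
  "closed_nbhd V l r v = insert v (open_nbhd V l r v)"

definition connected_graph :: "'a set \<Rightarrow> ('a \<Rightarrow> real) \<Rightarrow> ('a \<Rightarrow> real) \<Rightarrow> bool" where
  "connected_graph V l r \<longleftrightarrow> (\<forall>u\<in>V. \<forall>v\<in>V. (iadj V l r)\<^sup>*\<^sup>* u v)"

definition dominating :: "'a set \<Rightarrow> ('a \<Rightarrow> real) \<Rightarrow> ('a \<Rightarrow> real) \<Rightarrow> 'a set \<Rightarrow> bool" where
  "dominating V l r D \<longleftrightarrow> D \<subseteq> V \<and> (\<forall>v\<in>V. v \<in> D \<or> (\<exists>u\<in>D. iadj V l r u v))"

definition sym_diff :: "'a set \<Rightarrow> 'a set \<Rightarrow> 'a set" where
  "sym_diff A B = (A - B) \<union> (B - A)"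

definition reconf :: "'a set \<Rightarrow> ('a \<Rightarrow> real) \<Rightarrow> ('a \<Rightarrow> real) \<Rightarrow> nat \<Rightarrow> 'a set \<Rightarrow> 'a set \<Rightarrow> bool" where
  "reconf V l r k Dp Dq \<longleftrightarrow>
     (\<exists>xs :: 'a set list. xs \<noteq> [] \<and> hd xs = Dp \<and> last xs = Dq \<and>
        (\<forall>D \<in> set xs. dominating V l r D \<and> card D \<le> k) \<and>
        (\<forall>i. Suc i < length xs \<longrightarrow> card (sym_diff (xs ! i) (xs ! Suc i)) = 1))"

text \<open>Labels: 0 = unlabeled, 1, 2, 3.
One round: v_i = unlabeled vertex with minimum r; label it 1;
v_j = vertex of N[v_i] with maximum r; (re)label it 2;
every still unlabeled vertex of N(v_j) gets label 3.
If no vertex is unlabeled, the round does nothing.\<close>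
definition label_step :: "'a set \<Rightarrow> ('a \<Rightarrow> real) \<Rightarrow> ('a \<Rightarrow> real) \<Rightarrow> ('a \<Rightarrow> nat) \<Rightarrow> ('a \<Rightarrow> nat)" where
  "label_step V l r lab =
     (let U = {v \<in> V. lab v = 0} in
      if U = {} then lab else
      (let vi = (THE v. v \<in> U \<and> (\<forall>u\<in>U. r v \<le> r u));
           lab1 = lab(vi := 1);
           vj = (THE v. v \<in> closed_nbhd V l r vi \<and> (\<forall>u\<in>closed_nbhd V l r vi. r u \<le> r v));
           lab2 = lab1(vj := 2)
       in (\<lambda>u. if u \<in> open_nbhd V l r vj \<and> lab2 u = 0 then 3 else lab2 u)))"

text \<open>Each round labels at least one new vertex, so card V rounds suffice.\<close>
definition final_labels :: "'a set \<Rightarrow> ('a \<Rightarrow> real) \<Rightarrow> ('a \<Rightarrow> real) \<Rightarrow> 'a \<Rightarrow> nat" where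
  "final_labels V l r = (label_step V l r ^^ card V) (\<lambda>_. 0)"

definition V2 :: "'a set \<Rightarrow> ('a \<Rightarrow> real) \<Rightarrow> ('a \<Rightarrow> real) \<Rightarrow> 'a set" where
  "V2 V l r = {v \<in> V. final_labels V l r v = 2}"

end

theory Submission
  imports Defs
begin

text \<open>Follow the labeling procedure round by round, maintaining a dominating set
E \<union> S reachable from D, where S is the set of vertices labeled 2 so far and
|E| + |S| \<le> |D|; the labeled vertices are exactly those whose intervals meet one in S.
In a round, the leftmost unlabeled vertex v_i is dominated by some d \<in> E. Since v_j has
the largest right end among the intervals meeting v_i, and every unlabeled v ends right
of v_i, each unlabeled vertex dominated by d is also dominated by v_j; so adding v_j and
then removing d stays within size |D| + 1. Once all vertices are labeled, S = V_2 is
dominating and the vertices of E can be dropped one at a time.\<close>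

lemma reconf_iff_successively:
  "reconf V l r K A B \<longleftrightarrow> (\<exists>xs. xs \<noteq> [] \<and> hd xs = A \<and> last xs = B \<and>
     (\<forall>D\<in>set xs. dominating V l r D \<and> card D \<le> K) \<and>
     successively (\<lambda>X Y. card (sym_diff X Y) = 1) xs)"
  by (simp add: reconf_def successively_conv_nth)

lemma reconf_refl: "dominating V l r A \<Longrightarrow> card A \<le> K \<Longrightarrow> reconf V l r K A A"
  unfolding reconf_iff_successively by (rule exI[of _ "[A]"]) auto

lemma reconf_trans:
  assumes "reconf V l r K A B" "reconf V l r K B C"
  shows "reconf V l r K A C"
proof -
  obtain xs where xs: "xs \<noteq> []" "hd xs = A" "last xs = B"
     "\<forall>D\<in>set xs. dominating V l r D \<and> card D \<le> K"
     "successively (\<lambda>X Y. card (sym_diff X Y) = 1) xs"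
    using assms(1) unfolding reconf_iff_successively by blast
  obtain ys where ys: "ys \<noteq> []" "hd ys = B" "last ys = C"
     "\<forall>D\<in>set ys. dominating V l r D \<and> card D \<le> K"
     "successively (\<lambda>X Y. card (sym_diff X Y) = 1) ys"
    using assms(2) unfolding reconf_iff_successively by blast
  then obtain ys' where ys': "ys = B # ys'" by (cases ys) auto
  show ?thesis unfolding reconf_iff_successively
  proof (rule exI[of _ "xs @ ys'"], intro conjI)
    show "last (xs @ ys') = C" using xs ys ys' by (cases ys') auto
    show "successively (\<lambda>X Y. card (sym_diff X Y) = 1) (xs @ ys')"
      using xs ys ys' by (auto simp: successively_append_iff successively_Cons)
  qed (use xs ys ys' in auto)
qed

lemma reconf_sym:
  assumes "reconf V l r K A B"
  shows "reconf V l r K B A"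
proof -
  have sym: "sym_diff X Y = sym_diff Y X" for X Y :: "'a set"
    unfolding sym_diff_def by blast
  obtain xs where "xs \<noteq> []" "hd xs = A" "last xs = B"
     "\<forall>D\<in>set xs. dominating V l r D \<and> card D \<le> K"
     "successively (\<lambda>X Y. card (sym_diff X Y) = 1) xs"
    using assms unfolding reconf_iff_successively by blast
  then show ?thesis unfolding reconf_iff_successively
    by (intro exI[of _ "rev xs"]) (auto simp: hd_rev last_rev sym)
qed

lemma dominating_mono:
  "dominating V l r A \<Longrightarrow> A \<subseteq> B \<Longrightarrow> B \<subseteq> V \<Longrightarrow> dominating V l r B"
  unfolding dominating_def by blast

lemma reconf_insert:
  assumes "dominating V l r A" "x \<in> V" "x \<notin> A" "card (insert x A) \<le> K"
  shows "reconf V l r K A (insert x A)"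
proof -
  have "dominating V l r (insert x A)"
    using assms by (intro dominating_mono[OF assms(1)]) (auto simp: dominating_def)
  moreover have "sym_diff A (insert x A) = {x}"
    using assms(3) unfolding sym_diff_def by auto
  ultimately show ?thesis
    using assms card_insert_le[of A x] unfolding reconf_iff_successively
    by (intro exI[of _ "[A, insert x A]"]) auto
qed

lemma reconf_union:
  assumes "finite F" "F \<subseteq> V" "finite A" "dominating V l r A" "card (A \<union> F) \<le> K"
  shows "reconf V l r K A (A \<union> F)"
  using assms
proof (induction F rule: finite_induct)
  case empty
  then show ?case by (simp add: reconf_refl)
next
  case (insert x F)
  have "card (A \<union> F) \<le> card (A \<union> insert x F)"
    using insert.hyps(1) insert.prems(2) by (intro card_mono) auto
  then have card_le: "card (A \<union> F) \<le> K" using insert.prems(4) by linarith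
  have IH: "reconf V l r K A (A \<union> F)"
    using insert.IH insert.prems(1-3) card_le by blast
  show ?case
  proof (cases "x \<in> A \<union> F")
    case True
    then have "A \<union> insert x F = A \<union> F" by blast
    then show ?thesis using IH by simp
  next
    case False
    have "A \<subseteq> V" using insert.prems(3) unfolding dominating_def by blast
    then have "dominating V l r (A \<union> F)"
      using dominating_mono[OF insert.prems(3)] insert.prems(1) by blast
    then have "reconf V l r K (A \<union> F) (insert x (A \<union> F))"
      using False insert.prems by (intro reconf_insert) auto
    then show ?thesis using reconf_trans[OF IH] by simp
  qed
qed

lemma reconf_via_union:
  assumes "finite V" "dominating V l r A" "dominating V l r B" "card (A \<union> B) \<le> K"
  shows "reconf V l r K A B"
proof -
  have "A \<subseteq> V" "B \<subseteq> V" using assms(2,3) unfolding dominating_def by auto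
  then have "finite A" "finite B" using assms(1) finite_subset by auto
  have "reconf V l r K A (A \<union> B)"
    using reconf_union[OF \<open>finite B\<close> \<open>B \<subseteq> V\<close> \<open>finite A\<close> assms(2,4)] .
  moreover have "reconf V l r K B (B \<union> A)"
    using reconf_union[OF \<open>finite A\<close> \<open>A \<subseteq> V\<close> \<open>finite B\<close> assms(3)] assms(4)
    by (simp add: Un_commute)
  then have "reconf V l r K (A \<union> B) B" by (simp add: Un_commute reconf_sym)
  ultimately show ?thesis by (rule reconf_trans)
qed

lemma ex1_least_inj:
  fixes f :: "'a \<Rightarrow> 'b::linorder"
  assumes "finite U" "U \<noteq> {}" "inj_on f U"
  shows "\<exists>!v. v \<in> U \<and> (\<forall>u\<in>U. f v \<le> f u)"
proof -
  have "Min (f ` U) \<in> f ` U" using assms by simp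
  then obtain v where v: "v \<in> U" "f v = Min (f ` U)" by auto
  then have least: "\<forall>u\<in>U. f v \<le> f u" using assms by simp
  show ?thesis
  proof (rule ex1I[of _ v])
    show "\<And>w. w \<in> U \<and> (\<forall>u\<in>U. f w \<le> f u) \<Longrightarrow> w = v"
      using v least assms(3) by (meson inj_onD order_antisym)
  qed (use v least in auto)
qed

lemma ex1_greatest_inj:
  fixes f :: "'a \<Rightarrow> 'b::linorder"
  assumes "finite U" "U \<noteq> {}" "inj_on f U"
  shows "\<exists>!v. v \<in> U \<and> (\<forall>u\<in>U. f u \<le> f v)"
proof -
  have "Max (f ` U) \<in> f ` U" using assms by simp
  then obtain v where v: "v \<in> U" "f v = Max (f ` U)" by auto
  then have greatest: "\<forall>u\<in>U. f u \<le> f v" using assms by simp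
  show ?thesis
  proof (rule ex1I[of _ v])
    show "\<And>w. w \<in> U \<and> (\<forall>u\<in>U. f u \<le> f w) \<Longrightarrow> w = v"
      using v greatest assms(3) by (meson inj_onD order_antisym)
  qed (use v greatest in auto)
qed

locale interval_rep =
  fixes V :: "'a set" and l r :: "'a \<Rightarrow> real"
  assumes finite_V: "finite V"
    and left_le_right: "\<forall>v\<in>V. l v \<le> r v"
    and inj_right: "inj_on r V"
begin

definition meets :: "'a \<Rightarrow> 'a \<Rightarrow> bool" where
  "meets u v \<longleftrightarrow> l u \<le> r v \<and> l v \<le> r u"

lemma meets_commute: "meets u v \<longleftrightarrow> meets v u"
  unfolding meets_def by auto

lemma meets_refl: "v \<in> V \<Longrightarrow> meets v v"
  using left_le_right unfolding meets_def by auto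

lemma iadj_iff_meets:
  assumes "u \<in> V" "v \<in> V"
  shows "iadj V l r u v \<longleftrightarrow> u \<noteq> v \<and> meets u v"
proof -
  have "{l u..r u} \<inter> {l v..r v} \<noteq> {} \<longleftrightarrow> meets u v"
  proof
    assume "meets u v"
    then have "max (l u) (l v) \<in> {l u..r u} \<inter> {l v..r v}"
      using assms left_le_right unfolding meets_def by auto
    then show "{l u..r u} \<inter> {l v..r v} \<noteq> {}" by blast
  qed (auto simp: meets_def)
  then show ?thesis using assms unfolding iadj_def by auto
qed

lemma open_nbhd_iff_meets:
  "v \<in> V \<Longrightarrow> u \<in> open_nbhd V l r v \<longleftrightarrow> u \<in> V \<and> u \<noteq> v \<and> meets v u"
  unfolding open_nbhd_def using iadj_iff_meets by auto

lemma closed_nbhd_eq: "v \<in> V \<Longrightarrow> closed_nbhd V l r v = {u\<in>V. meets v u}"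
  unfolding closed_nbhd_def using open_nbhd_iff_meets meets_refl by auto

lemma dominating_iff_meets:
  "dominating V l r D \<longleftrightarrow> D \<subseteq> V \<and> (\<forall>v\<in>V. \<exists>u\<in>D. meets u v)"
  unfolding dominating_def using iadj_iff_meets meets_refl by (metis subsetD)

lemma meets_extremal:
  assumes "v \<in> V" "meets vi vj" "meets d v" "r d \<le> r vj" "r vi \<le> r v"
  shows "meets vj v"
  using assms left_le_right unfolding meets_def by fastforce

definition twos :: "('a \<Rightarrow> nat) \<Rightarrow> 'a set" where
  "twos lab = {v\<in>V. lab v = 2}"

definition unlabeled :: "('a \<Rightarrow> nat) \<Rightarrow> 'a set" where
  "unlabeled lab = {v\<in>V. lab v = 0}"

lemma finite_unlabeled: "finite (unlabeled lab)"
  unfolding unlabeled_def using finite_V by simp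

lemma finite_twos: "finite (twos lab)"
  unfolding twos_def using finite_V by simp

lemma label_step_unlabeled_empty:
  "unlabeled lab = {} \<Longrightarrow> label_step V l r lab = lab"
  unfolding label_step_def unlabeled_def Let_def by simp

definition leftmost_unlabeled :: "('a \<Rightarrow> nat) \<Rightarrow> 'a" where
  "leftmost_unlabeled lab =
     (THE v. v \<in> unlabeled lab \<and> (\<forall>u\<in>unlabeled lab. r v \<le> r u))"

definition rightmost_neighbour :: "'a \<Rightarrow> 'a" where
  "rightmost_neighbour v =
     (THE w. w \<in> closed_nbhd V l r v \<and> (\<forall>u\<in>closed_nbhd V l r v. r u \<le> r w))"

lemma leftmost_unlabeled:
  assumes "unlabeled lab \<noteq> {}"
  shows "leftmost_unlabeled lab \<in> unlabeled lab"
    and "u \<in> unlabeled lab \<Longrightarrow> r (leftmost_unlabeled lab) \<le> r u"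
proof -
  let ?U = "unlabeled lab"
  have "inj_on r ?U" using inj_right by (rule inj_on_subset) (auto simp: unlabeled_def)
  then have "\<exists>!v. v \<in> ?U \<and> (\<forall>u\<in>?U. r v \<le> r u)"
    using assms finite_unlabeled by (intro ex1_least_inj)
  then have "leftmost_unlabeled lab \<in> ?U \<and> (\<forall>u\<in>?U. r (leftmost_unlabeled lab) \<le> r u)"
    unfolding leftmost_unlabeled_def by (rule theI')
  then show "leftmost_unlabeled lab \<in> ?U" "u \<in> ?U \<Longrightarrow> r (leftmost_unlabeled lab) \<le> r u"
    by blast+
qed

lemma rightmost_neighbour:
  assumes "v \<in> V"
  shows "rightmost_neighbour v \<in> V" "meets v (rightmost_neighbour v)"
    and "u \<in> V \<Longrightarrow> meets v u \<Longrightarrow> r u \<le> r (rightmost_neighbour v)"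
proof -
  let ?N = "closed_nbhd V l r v"
  have N: "?N = {u\<in>V. meets v u}" using closed_nbhd_eq[OF assms] .
  have "inj_on r ?N" using inj_right by (rule inj_on_subset) (auto simp: N)
  moreover have "v \<in> ?N" using assms meets_refl by (simp add: N)
  ultimately have "\<exists>!w. w \<in> ?N \<and> (\<forall>u\<in>?N. r u \<le> r w)"
    using finite_V by (intro ex1_greatest_inj) (auto simp: N)
  then have "rightmost_neighbour v \<in> ?N \<and> (\<forall>u\<in>?N. r u \<le> r (rightmost_neighbour v))"
    unfolding rightmost_neighbour_def by (rule theI')
  then show "rightmost_neighbour v \<in> V" "meets v (rightmost_neighbour v)"
    and "u \<in> V \<Longrightarrow> meets v u \<Longrightarrow> r u \<le> r (rightmost_neighbour v)"
    unfolding N by auto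
qed

lemma label_step_eq:
  assumes "unlabeled lab \<noteq> {}"
  defines "vi \<equiv> leftmost_unlabeled lab" and "vj \<equiv> rightmost_neighbour (leftmost_unlabeled lab)"
  shows "label_step V l r lab = (\<lambda>u. if u \<in> open_nbhd V l r vj \<and> (lab(vi := 1, vj := 2)) u = 0
      then 3 else (lab(vi := 1, vj := 2)) u)"
  using assms(1) unfolding label_step_def Let_def unlabeled_def[symmetric] vi_def vj_def
    leftmost_unlabeled_def[symmetric] rightmost_neighbour_def[symmetric] by simp

lemma
  assumes "unlabeled lab \<noteq> {}"
  defines "vj \<equiv> rightmost_neighbour (leftmost_unlabeled lab)"
  shows label_step_eq_0: "v \<in> V \<Longrightarrow> label_step V l r lab v = 0 \<longleftrightarrow> lab v = 0 \<and> \<not> meets vj v"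
    and twos_label_step: "twos (label_step V l r lab) = insert vj (twos lab)"
proof -
  let ?vi = "leftmost_unlabeled lab"
  have vi: "?vi \<in> V" "lab ?vi = 0"
    using leftmost_unlabeled(1)[OF assms(1)] unfolding unlabeled_def by auto
  have vj: "vj \<in> V" "meets vj ?vi"
    using rightmost_neighbour[OF vi(1)] meets_commute unfolding vj_def by auto
  note step = label_step_eq[OF assms(1), folded vj_def]
  show "label_step V l r lab v = 0 \<longleftrightarrow> lab v = 0 \<and> \<not> meets vj v" if "v \<in> V"
  proof (cases "v = vj \<or> v = ?vi")
    case True
    then show ?thesis unfolding step using vj meets_refl[OF vj(1)] by auto
  next
    case False
    then show ?thesis unfolding step using open_nbhd_iff_meets[OF vj(1), of v] that by auto
  qed
  show "twos (label_step V l r lab) = insert vj (twos lab)"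
    unfolding step twos_def using vi vj(1) by auto
qed

lemma card_unlabeled_label_step:
  assumes "unlabeled lab \<noteq> {}"
  shows "card (unlabeled (label_step V l r lab)) < card (unlabeled lab)"
proof -
  let ?vi = "leftmost_unlabeled lab"
  have vi: "?vi \<in> unlabeled lab" by (rule leftmost_unlabeled(1)[OF assms])
  then have "meets (rightmost_neighbour ?vi) ?vi"
    using rightmost_neighbour(2) meets_commute unfolding unlabeled_def by blast
  then have "unlabeled (label_step V l r lab) \<subseteq> unlabeled lab - {?vi}"
    using label_step_eq_0[OF assms] unfolding unlabeled_def by blast
  then have "card (unlabeled (label_step V l r lab)) \<le> card (unlabeled lab - {?vi})"
    using finite_unlabeled by (intro card_mono) auto
  also have "\<dots> < card (unlabeled lab)"
    using finite_unlabeled vi by (rule card_Diff1_less)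
  finally show ?thesis .
qed

definition labeled_by_twos :: "('a \<Rightarrow> nat) \<Rightarrow> bool" where
  "labeled_by_twos lab \<longleftrightarrow> (\<forall>v\<in>V. lab v \<noteq> 0 \<longleftrightarrow> (\<exists>s\<in>twos lab. meets s v))"

lemma labeled_by_twos_label_step:
  assumes "labeled_by_twos lab"
  shows "labeled_by_twos (label_step V l r lab)"
proof (cases "unlabeled lab = {}")
  case True
  then show ?thesis using assms label_step_unlabeled_empty by simp
next
  case False
  then show ?thesis
    using assms label_step_eq_0[OF False] twos_label_step[OF False]
    unfolding labeled_by_twos_def by auto
qed

definition labels :: "nat \<Rightarrow> 'a \<Rightarrow> nat" where
  "labels k = (label_step V l r ^^ k) (\<lambda>_. 0)"

lemma labels_Suc: "labels (Suc k) = label_step V l r (labels k)"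
  unfolding labels_def by simp

lemma labeled_by_twos_labels: "labeled_by_twos (labels k)"
proof (induction k)
  case 0
  then show ?case unfolding labeled_by_twos_def twos_def labels_def by simp
next
  case (Suc k)
  then show ?case using labeled_by_twos_label_step labels_Suc by simp
qed

lemma card_unlabeled_labels: "card (unlabeled (labels k)) + k \<le> card V \<or> unlabeled (labels k) = {}"
proof (induction k)
  case 0
  then show ?case unfolding labels_def unlabeled_def by simp
next
  case (Suc k)
  then show ?case
    using card_unlabeled_label_step[of "labels k"] label_step_unlabeled_empty[of "labels k"]
    by (cases "unlabeled (labels k) = {}") (auto simp: labels_Suc)
qed

lemma V2_eq_twos: "V2 V l r = twos (labels (card V))"
  unfolding V2_def twos_def labels_def final_labels_def ..

lemma dominating_V2: "dominating V l r (V2 V l r)"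
proof -
  have "unlabeled (labels (card V)) = {}"
    using card_unlabeled_labels[of "card V"] finite_unlabeled card_gt_0_iff by fastforce
  then show ?thesis
    using labeled_by_twos_labels[of "card V"]
    unfolding dominating_iff_meets V2_eq_twos labeled_by_twos_def unlabeled_def twos_def by auto
qed

lemma exchange_step:
  assumes "labeled_by_twos lab" "unlabeled lab \<noteq> {}" "dominating V l r (E \<union> twos lab)"
  obtains d where "d \<in> E"
    "dominating V l r ((E - {d}) \<union> twos (label_step V l r lab))"
proof -
  let ?vi = "leftmost_unlabeled lab"
  let ?vj = "rightmost_neighbour ?vi"
  have vi: "?vi \<in> V" "lab ?vi = 0"
    using leftmost_unlabeled(1)[OF assms(2)] unfolding unlabeled_def by auto
  have dom: "E \<union> twos lab \<subseteq> V" "\<forall>v\<in>V. \<exists>u\<in>E \<union> twos lab. meets u v"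
    using assms(3) unfolding dominating_iff_meets by auto
  obtain d where d: "d \<in> E \<union> twos lab" "meets d ?vi"
    using dom(2) vi(1) by blast
  have "d \<notin> twos lab"
    using assms(1) d vi unfolding labeled_by_twos_def by auto
  with d have "d \<in> E" by auto
  have "r d \<le> r ?vj"
    using rightmost_neighbour(3)[OF vi(1)] d dom(1) meets_commute by blast
  have "\<exists>u\<in>(E - {d}) \<union> insert ?vj (twos lab). meets u v" if v: "v \<in> V" for v
  proof -
    obtain e where e: "e \<in> E \<union> twos lab" "meets e v" using dom(2) v by blast
    show ?thesis
    proof (cases "e = d \<and> lab v = 0")
      case True
      then have "r ?vi \<le> r v"
        using leftmost_unlabeled(2)[OF assms(2)] v unfolding unlabeled_def by blast
      then have "meets ?vj v"
        using meets_extremal[OF v rightmost_neighbour(2)[OF vi(1)] _ \<open>r d \<le> r ?vj\<close>] e True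
        by blast
      then show ?thesis by blast
    next
      case False
      then show ?thesis
        using e assms(1) v unfolding labeled_by_twos_def by blast
    qed
  qed
  then have "dominating V l r ((E - {d}) \<union> twos (label_step V l r lab))"
    unfolding dominating_iff_meets twos_label_step[OF assms(2)]
    using dom(1) rightmost_neighbour(1)[OF vi(1)] by auto
  then show thesis using that \<open>d \<in> E\<close> by blast
qed

lemma reconf_labels:
  assumes "dominating V l r D"
  shows "\<exists>E. card E + card (twos (labels k)) \<le> card D \<and> dominating V l r (E \<union> twos (labels k))
    \<and> reconf V l r (card D + 1) D (E \<union> twos (labels k))"
proof (induction k)
  case 0
  have "twos (labels 0) = {}" unfolding twos_def labels_def by simp
  then show ?case using assms reconf_refl by fastforce
next
  case (Suc k)
  let ?S = "twos (labels k)"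
  obtain E where E: "card E + card ?S \<le> card D" "dominating V l r (E \<union> ?S)"
    "reconf V l r (card D + 1) D (E \<union> ?S)"
    using Suc by blast
  have "finite E" using E(2) finite_V unfolding dominating_def by (meson finite_subset le_supE)
  show ?case
  proof (cases "unlabeled (labels k) = {}")
    case True
    then have "labels (Suc k) = labels k" by (simp add: labels_Suc label_step_unlabeled_empty)
    then show ?thesis using E by auto
  next
    case False
    let ?x = "rightmost_neighbour (leftmost_unlabeled (labels k))"
    have S': "twos (labels (Suc k)) = insert ?x ?S"
      using twos_label_step[OF False] by (simp add: labels_Suc)
    obtain d where d: "d \<in> E" and dom': "dominating V l r ((E - {d}) \<union> insert ?x ?S)"
      using exchange_step[OF labeled_by_twos_labels False E(2)] S' by (metis labels_Suc)
    have "Suc (card (E - {d})) = card E" using \<open>finite E\<close> d by (rule card_Suc_Diff1)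
    moreover have "card (insert ?x ?S) \<le> Suc (card ?S)"
      using finite_twos by (simp add: card_insert_if)
    ultimately have "card (E - {d}) + card (insert ?x ?S) \<le> card D" using E(1) by linarith
    moreover have "card ((E \<union> ?S) \<union> ((E - {d}) \<union> insert ?x ?S)) \<le> card D + 1"
    proof -
      have "card ((E \<union> ?S) \<union> ((E - {d}) \<union> insert ?x ?S)) \<le> card (insert ?x (E \<union> ?S))"
        using \<open>finite E\<close> finite_twos by (intro card_mono) auto
      also have "\<dots> \<le> card E + card ?S + 1"
        using card_Un_le[of E ?S] \<open>finite E\<close> finite_twos by (simp add: card_insert_if)
      finally show ?thesis using E(1) by linarith
    qed
    then have "reconf V l r (card D + 1) (E \<union> ?S) ((E - {d}) \<union> insert ?x ?S)"
      using reconf_via_union[OF finite_V E(2) dom'] by simp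
    ultimately show ?thesis
      using reconf_trans[OF E(3)] dom' S' by (intro exI[of _ "E - {d}"]) simp
  qed
qed

end

theorem lemma13:
  fixes V :: "'a set" and l r :: "'a \<Rightarrow> real"
  assumes "finite V"
    and "\<forall>v\<in>V. l v \<le> r v"
    and "inj_on r V"
    and "connected_graph V l r"
    and "dominating V l r D"
  shows "reconf V l r (card D + 1) D (V2 V l r)"
proof -
  interpret interval_rep V l r
    using assms(1-3) by unfold_locales
  obtain E where E: "card E + card (V2 V l r) \<le> card D" "dominating V l r (E \<union> V2 V l r)"
    "reconf V l r (card D + 1) D (E \<union> V2 V l r)"
    using reconf_labels[OF assms(5), of "card V"] V2_eq_twos by auto
  have "card ((E \<union> V2 V l r) \<union> V2 V l r) \<le> card D + 1"
    using card_Un_le[of E "V2 V l r"] E(1) by (simp add: Un_absorb2)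
  then have "reconf V l r (card D + 1) (E \<union> V2 V l r) (V2 V l r)"
    using reconf_via_union[OF assms(1) E(2) dominating_V2] by blast
  then show ?thesis using reconf_trans[OF E(3)] by blast
qed

end
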